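(* Let $A=(a_{ij})\in\mathbb{R}^{n\times n}$ be symmetric positive definite, $b\in\mathbb{R}^n$, and let $x\in\mathbb{R}^n$ be a current approximation with residual $r=b-Ax=(r_1,\dots,r_n)^T$, assumed nonzero. Let $1\le m\le n$ and let $\mathcal{J}=\{i_1,\dots,i_m\}\subseteq\{1,\dots,n\}$ be a set of $m$ distinct indices consisting of the indices of $m$ components of $r$ with largest absolute value. Let $E=[e_{i_1},\dots,e_{i_m}]\in\mathbb{R}^{n\times m}$, where $e_j$ denotes the $j$-th column of the $n\times n$ identity matrix, set $y=(E^TAE)^{-1}E^Tr$ and $x_{new}=x+Ey$. Let $d=A^{-1}b-x$ and $d_{new}=A^{-1}b-x_{new}$. Then $$\|d\|_A^2-\|d_{new}\|_A^2\ \ge\ \frac{\sum_{k\in\mathcal{J}} r_k^2}{\sum_{k\in\mathcal{J}} a_{kk}},$$ and $$\|d_{new}\|_A\ \le\ \left(1-\frac{\lambda_{min}(A)}{\sum_{k\in\mathcal{J}} a_{kk}}\cdot\frac{\sum_{k\in\mathcal{J}} r_k^2}{\sum_{k=1}^{n} r_k^2}\right)^{1/2}\|d\|_A .$$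
   Context: For a vector $z$, $\|z\|_A=(Az,z)^{1/2}$ denotes the $A$-norm. $\lambda_{min}(A)$ denotes the smallest eigenvalue of $A$. The update $x_{new}=x+Ey$ is one step of the projection method with search and constraint space $\mathrm{span}\{e_{i_1},\dots,e_{i_m}\}$ (Petrov–Galerkin condition $r-AEy\perp \mathrm{span}\{e_{i_1},\dots,e_{i_m}\}$). *)

theory Defs
  imports "HOL-Analysis.Analysis"
begin

definition A_norm :: "real^'n^'n \<Rightarrow> real^'n \<Rightarrow> real" where
  "A_norm A z = sqrt (z \<bullet> (A *v z))"

definition sym_pos_def :: "real^'n^'n \<Rightarrow> bool" where
  "sym_pos_def A \<longleftrightarrow> transpose A = A \<and> (\<forall>v. v \<noteq> 0 \<longrightarrow> v \<bullet> (A *v v) > 0)"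

definition is_eigenvalue :: "real^'n^'n \<Rightarrow> real \<Rightarrow> bool" where
  "is_eigenvalue A l \<longleftrightarrow> (\<exists>v. v \<noteq> 0 \<and> A *v v = l *\<^sub>R v)"

definition lambda_min :: "real^'n^'n \<Rightarrow> real" where
  "lambda_min A = Inf {l. is_eigenvalue A l}"

text \<open>Matrix E = [e_{i_1},...,e_{i_m}] with columns indexed by the type 'm via idx.\<close>
definition sel_matrix :: "('m \<Rightarrow> 'n) \<Rightarrow> real^'m^'n" where
  "sel_matrix idx = (\<chi> i j. if i = idx j then 1 else 0)"

end

theory Submission
  imports Defs
begin

text \<open>The new error \<open>d_new = d - E y\<close> is the Galerkin projection: it has the least energy
  \<open>\<parallel>d - E z\<parallel>\<^sub>A\<^sup>2\<close> among all corrections \<open>E z\<close>. Testing with the scaled residual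
  \<open>z = E\<^sup>T r / \<Sum>\<^sub>J a\<^sub>k\<^sub>k\<close> and bounding the quadratic form of a vector supported on \<open>J\<close> by its
  squared norm times the diagonal sum over \<open>J\<close> gives the energy decrease. The contraction
  factor then follows from \<open>\<lambda>\<^sub>m\<^sub>i\<^sub>n(A) \<parallel>d\<parallel>\<^sub>A\<^sup>2 \<le> \<parallel>A d\<parallel>\<^sup>2 = \<parallel>r\<parallel>\<^sup>2\<close>, for which the minimum of
  the Rayleigh quotient is shown to be an eigenvalue.\<close>

lemma matrix_vector_mult_inner_transpose:
  fixes E :: "real^'m^'n"
  shows "(E *v y) \<bullet> z = y \<bullet> (transpose E *v z)"
  by (metis dot_lmul_matrix inner_commute transpose_matrix_vector)

lemma symmetric_inner_mult_commute:
  fixes A :: "real^'n^'n"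
  assumes "transpose A = A"
  shows "u \<bullet> (A *v w) = w \<bullet> (A *v u)"
  by (metis assms inner_commute matrix_vector_mult_inner_transpose)

lemma symmetric_matrix_entry:
  fixes A :: "real^'n^'n"
  assumes "transpose A = A"
  shows "A $ i $ j = A $ j $ i"
proof -
  have "A $ i $ j = transpose A $ j $ i"
    by (simp add: transpose_def)
  then show ?thesis
    using assms by simp
qed

lemma sym_pos_defD:
  assumes "sym_pos_def A"
  shows "transpose A = A" "v \<noteq> 0 \<Longrightarrow> v \<bullet> (A *v v) > 0" "v \<bullet> (A *v v) \<ge> 0"
  using assms unfolding sym_pos_def_def by (metis inner_zero_left less_imp_le order_refl)+

lemma pos_def_gram_invertible:
  fixes A :: "real^'n^'n" and E :: "real^'m^'n"
  assumes "sym_pos_def A" and "\<And>v. E *v v = 0 \<Longrightarrow> v = 0"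
  shows "invertible (transpose E ** A ** E)"
proof -
  have "v = 0" if "(transpose E ** A ** E) *v v = 0" for v
  proof -
    have "(E *v v) \<bullet> (A *v (E *v v)) = 0"
      using that by (simp add: matrix_vector_mul_assoc[symmetric] matrix_vector_mult_inner_transpose)
    then show "v = 0"
      using sym_pos_defD(2)[OF assms(1)] assms(2) by (metis less_irrefl)
  qed
  then show ?thesis
    using invertible_left_inverse matrix_left_invertible_ker by blast
qed

lemma sym_pos_def_invertible:
  fixes A :: "real^'n^'n"
  assumes "sym_pos_def A"
  shows "invertible A"
  using pos_def_gram_invertible[OF assms, of "mat 1"] by simp

lemma matrix_inv_right:
  fixes A :: "real^'n^'n"
  assumes "invertible A"
  shows "A ** matrix_inv A = mat 1"
  using someI_ex[OF assms[unfolded invertible_def]] unfolding matrix_inv_def by auto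

lemma sel_matrix_mult_vector:
  fixes idx :: "'m::finite \<Rightarrow> 'n::finite"
  assumes "inj idx"
  shows "(sel_matrix idx *v v) $ i = (if i \<in> range idx then v $ inv idx i else 0)"
proof -
  have "(sel_matrix idx *v v) $ i = (\<Sum>j\<in>UNIV. if j = inv idx i \<and> i \<in> range idx then v $ j else 0)"
    unfolding sel_matrix_def matrix_vector_mult_def
    by (auto intro!: sum.cong simp: assms inv_f_f)
  then show ?thesis
    by (cases "i \<in> range idx") auto
qed

lemma sel_matrix_mult_vector_idx:
  fixes idx :: "'m::finite \<Rightarrow> 'n::finite"
  assumes "inj idx"
  shows "(sel_matrix idx *v v) $ idx j = v $ j"
  using sel_matrix_mult_vector[OF assms] assms by (simp add: inv_f_f)

lemma transpose_sel_matrix_mult_vector: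
  fixes idx :: "'m::finite \<Rightarrow> 'n::finite"
  shows "(transpose (sel_matrix idx) *v r) $ j = r $ idx j"
proof -
  have "(transpose (sel_matrix idx) *v r) $ j = (\<Sum>i\<in>UNIV. (if i = idx j then 1 else 0) * r $ i)"
    by (simp add: sel_matrix_def matrix_vector_mult_def transpose_def)
  also have "\<dots> = (\<Sum>i\<in>UNIV. if i = idx j then r $ i else 0)"
    by (rule sum.cong) auto
  finally show ?thesis by simp
qed

lemma inner_axis_mult_axis:
  fixes A :: "real^'n^'n"
  shows "axis i 1 \<bullet> (A *v axis j 1) = A $ i $ j"
proof -
  have "(A *v axis j 1) $ i = (\<Sum>k\<in>UNIV. A$i$k * (if k = j then 1 else 0))"
    by (simp add: matrix_vector_mult_def axis_def)
  also have "\<dots> = (\<Sum>k\<in>UNIV. if k = j then A$i$k else 0)"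
    by (rule sum.cong) auto
  finally show ?thesis by (simp add: inner_axis')
qed

lemma psd_diag_nonneg:
  fixes A :: "real^'n^'n"
  assumes "\<forall>v. v \<bullet> (A *v v) \<ge> 0"
  shows "A $ k $ k \<ge> 0"
  using assms inner_axis_mult_axis[of k A k] by metis

lemma sym_pos_def_diag_pos:
  fixes A :: "real^'n^'n"
  assumes "sym_pos_def A"
  shows "A $ k $ k > 0"
  using sym_pos_defD(2)[OF assms, of "axis k 1"] by (simp add: inner_axis_mult_axis)

lemma psd_entry_bound:
  fixes A :: "real^'n^'n"
  assumes sym: "transpose A = A" and psd: "\<forall>v. v \<bullet> (A *v v) \<ge> 0"
  shows "2*a*b*A$i$j \<le> a\<^sup>2 * A$j$j + b\<^sup>2 * A$i$i"
proof -
  define x where "x = b *\<^sub>R axis i (1::real)"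
  define y where "y = a *\<^sub>R axis j (1::real)"
  have "x \<bullet> (A *v y) = b * a * A$i$j" and "y \<bullet> (A *v x) = a * b * A$i$j"
    and "x \<bullet> (A *v x) = b\<^sup>2 * A$i$i" and "y \<bullet> (A *v y) = a\<^sup>2 * A$j$j"
    using symmetric_matrix_entry[OF sym, of j i]
    by (simp_all add: x_def y_def matrix_vector_mult_scaleR inner_axis_mult_axis power2_eq_square)
  moreover have "(x - y) \<bullet> (A *v (x - y)) = x \<bullet> (A *v x) - x \<bullet> (A *v y) - y \<bullet> (A *v x) + y \<bullet> (A *v y)"
    by (simp add: matrix_vector_mult_diff_distrib inner_diff_left inner_diff_right)
  ultimately show ?thesis
    using psd[rule_format, of "x - y"] by (simp add: algebra_simps)
qed

lemma psd_quadratic_form_le_diag_sum: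
  fixes A :: "real^'n^'n"
  assumes sym: "transpose A = A" and psd: "\<forall>v. v \<bullet> (A *v v) \<ge> 0"
    and supp: "\<And>k. k \<notin> J \<Longrightarrow> u $ k = 0"
  shows "u \<bullet> (A *v u) \<le> (u \<bullet> u) * (\<Sum>k\<in>J. A$k$k)"
proof -
  define w where "w k = (if k \<in> J then A$k$k else 0)" for k
  have w_nonneg: "w k \<ge> 0" for k
    using psd_diag_nonneg[OF psd] by (simp add: w_def)
  have entry: "2 * (u$i * A$i$j * u$j) \<le> (u$i)\<^sup>2 * w j + w i * (u$j)\<^sup>2" for i j
  proof (cases "i \<in> J \<and> j \<in> J")
    case True
    then show ?thesis
      using psd_entry_bound[OF sym psd, of "u$i" "u$j" i j] by (simp add: w_def algebra_simps)
  next
    case False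
    then have "u$i * A$i$j * u$j = 0" using supp by auto
    moreover have "0 \<le> (u$i)\<^sup>2 * w j + w i * (u$j)\<^sup>2"
      using w_nonneg by (intro add_nonneg_nonneg mult_nonneg_nonneg) auto
    ultimately show ?thesis by linarith
  qed
  have "2 * (u \<bullet> (A *v u)) = (\<Sum>i\<in>UNIV. \<Sum>j\<in>UNIV. 2 * (u$i * A$i$j * u$j))"
    by (simp add: inner_vec_def matrix_vector_mult_def sum_distrib_left mult.assoc)
  also have "\<dots> \<le> (\<Sum>i\<in>UNIV. \<Sum>j\<in>UNIV. (u$i)\<^sup>2 * w j + w i * (u$j)\<^sup>2)"
    by (intro sum_mono entry)
  also have "\<dots> = (\<Sum>k\<in>UNIV. (u$k)\<^sup>2) * (\<Sum>k\<in>UNIV. w k) + (\<Sum>k\<in>UNIV. w k) * (\<Sum>k\<in>UNIV. (u$k)\<^sup>2)"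
    by (simp add: sum.distrib sum_product)
  also have "\<dots> = 2 * ((\<Sum>k\<in>UNIV. (u$k)\<^sup>2) * (\<Sum>k\<in>UNIV. w k))"
    by simp
  also have "(\<Sum>k\<in>UNIV. w k) = (\<Sum>k\<in>J. A$k$k)"
    unfolding w_def by (simp add: sum.If_cases)
  finally show ?thesis
    by (simp add: inner_vec_def power2_eq_square)
qed

lemma galerkin_energy_minimal:
  fixes A :: "real^'n^'n" and E :: "real^'m^'n" and d :: "real^'n"
  assumes sym: "transpose A = A" and psd: "\<forall>v. v \<bullet> (A *v v) \<ge> 0"
    and gram: "invertible (transpose E ** A ** E)"
  defines "y \<equiv> matrix_inv (transpose E ** A ** E) *v (transpose E *v (A *v d))"
  shows "(d - E *v y) \<bullet> (A *v (d - E *v y)) \<le> (d - E *v z) \<bullet> (A *v (d - E *v z))"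
proof -
  define e where "e = d - E *v y"
  define w where "w = E *v (y - z)"
  have "transpose E *v (A *v (E *v y)) = (transpose E ** A ** E) *v y"
    by (simp add: matrix_vector_mul_assoc matrix_mul_assoc)
  also have "\<dots> = transpose E *v (A *v d)"
    unfolding y_def by (metis matrix_vector_mul_assoc matrix_inv_right[OF gram] matrix_vector_mul_lid)
  finally have orth: "transpose E *v (A *v e) = 0"
    by (simp add: e_def matrix_vector_mult_diff_distrib)
  have "d - E *v z = e + w"
    by (simp add: e_def w_def matrix_vector_mult_diff_distrib)
  moreover have "w \<bullet> (A *v e) = 0"
    unfolding w_def matrix_vector_mult_inner_transpose orth by simp
  ultimately have "(d - E *v z) \<bullet> (A *v (d - E *v z)) = e \<bullet> (A *v e) + w \<bullet> (A *v w)"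
    using symmetric_inner_mult_commute[OF sym, of e w]
    by (simp add: matrix_vector_right_distrib inner_add_left inner_add_right)
  then show ?thesis
    using psd unfolding e_def by (metis le_add_same_cancel1)
qed

lemma sel_projection_energy_decrease:
  fixes A :: "real^'n^'n" and idx :: "'m::finite \<Rightarrow> 'n" and d :: "real^'n"
  assumes spd: "sym_pos_def A" and inj: "inj idx"
  defines "E \<equiv> sel_matrix idx" and "r \<equiv> A *v d"
  defines "y \<equiv> matrix_inv (transpose E ** A ** E) *v (transpose E *v r)"
  shows "(\<Sum>k\<in>range idx. (r$k)\<^sup>2) / (\<Sum>k\<in>range idx. A$k$k)
           \<le> d \<bullet> (A *v d) - (d - E *v y) \<bullet> (A *v (d - E *v y))"
proof -
  have sym: "transpose A = A" and psd: "\<forall>v. v \<bullet> (A *v v) \<ge> 0"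
    using sym_pos_defD[OF spd] by blast+
  define S where "S = (\<Sum>k\<in>range idx. (r$k)\<^sup>2)"
  define T where "T = (\<Sum>k\<in>range idx. A$k$k)"
  define w where "w = E *v (transpose E *v r)"
  have w_at: "w $ k = (if k \<in> range idx then r $ k else 0)" for k
    unfolding w_def E_def sel_matrix_mult_vector[OF inj] transpose_sel_matrix_mult_vector
    by (simp add: f_inv_into_f)
  have wr: "w \<bullet> r = S" and ww: "w \<bullet> w = S"
    unfolding inner_vec_def w_at S_def
    by (simp_all add: if_distrib[of "\<lambda>t. t * _"] sum.If_cases power2_eq_square)
  have wAw: "w \<bullet> (A *v w) \<le> S * T"
    using psd_quadratic_form_le_diag_sum[OF sym psd, of "range idx" w] w_at ww
    unfolding T_def by simp
  have T_pos: "T > 0"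
    unfolding T_def using sym_pos_def_diag_pos[OF spd] by (simp add: sum_pos)
  have "E *v v = 0 \<Longrightarrow> v = 0" for v
    using sel_matrix_mult_vector_idx[OF inj, of v] unfolding E_def by (simp add: vec_eq_iff)
  then have gram: "invertible (transpose E ** A ** E)"
    by (rule pos_def_gram_invertible[OF spd])
  define z where "z = (1/T) *\<^sub>R (transpose E *v r)"
  have Ez: "E *v z = (1/T) *\<^sub>R w"
    unfolding z_def w_def by (rule matrix_vector_mult_scaleR)
  have "(d - E *v y) \<bullet> (A *v (d - E *v y)) \<le> (d - E *v z) \<bullet> (A *v (d - E *v z))"
    using galerkin_energy_minimal[OF sym psd gram] unfolding y_def r_def by blast
  also have "\<dots> = d \<bullet> (A *v d) - 2 * (w \<bullet> r) / T + w \<bullet> (A *v w) / T\<^sup>2"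
    unfolding Ez r_def using symmetric_inner_mult_commute[OF sym, of d w] T_pos
    by (simp add: matrix_vector_mult_diff_distrib matrix_vector_mult_scaleR inner_diff_left
        inner_diff_right power2_eq_square field_simps)
  also have "\<dots> \<le> d \<bullet> (A *v d) - S / T"
  proof -
    have "w \<bullet> (A *v w) / T\<^sup>2 \<le> S / T"
      using wAw T_pos by (simp add: divide_simps power2_eq_square)
    moreover have "2 * S / T = 2 * (S / T)"
      by simp
    ultimately show ?thesis
      unfolding wr by linarith
  qed
  finally show ?thesis
    unfolding S_def T_def by simp
qed

lemma quadratic_nonneg_imp_linear_coeff_zero:
  fixes G c :: real
  assumes nonneg: "\<And>t. 2*t*G + t\<^sup>2*c \<ge> 0" and "c \<ge> 0" and "G \<ge> 0"
  shows "G = 0"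
proof (rule ccontr)
  assume "G \<noteq> 0"
  with assms have G_pos: "G > 0" by simp
  define t where "t = - G / (c+1)"
  have c1_pos: "c + 1 > 0" using assms by simp
  have "t < 0" using G_pos c1_pos unfolding t_def by simp
  moreover have "t * (2*G + t*c) \<ge> 0"
    using nonneg[of t] by (simp add: power2_eq_square algebra_simps)
  ultimately have "2*G + t*c \<le> 0" by (simp add: mult_le_0_iff zero_le_mult_iff)
  moreover have "G * (c/(c+1)) \<le> G"
    using c1_pos G_pos by (intro mult_left_le) simp_all
  moreover have "t*c = - (G * (c/(c+1)))"
    unfolding t_def by simp
  ultimately show False
    using G_pos by linarith
qed

text \<open>\<open>A - \<mu> I\<close> is positive semidefinite and its quadratic form vanishes at \<open>v\<close>, so \<open>v\<close> lies
  in its kernel.\<close>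

lemma rayleigh_minimizer_eigenvector:
  fixes A :: "real^'n^'n"
  assumes sym: "transpose A = A" and lb: "\<And>w. \<mu> * (w \<bullet> w) \<le> w \<bullet> (A *v w)"
    and attained: "v \<bullet> (A *v v) = \<mu> * (v \<bullet> v)"
  shows "A *v v = \<mu> *\<^sub>R v"
proof -
  define q where "q w = w \<bullet> (A *v w) - \<mu> * (w \<bullet> w)" for w
  define g where "g = A *v v - \<mu> *\<^sub>R v"
  have "q (v + t *\<^sub>R g) = 2*t*(g \<bullet> g) + t\<^sup>2 * q g" for t
  proof -
    have "q (v + t *\<^sub>R g) = q v + t * (v \<bullet> (A *v g)) + t * (g \<bullet> (A *v v))
                           - 2 * t * \<mu> * (g \<bullet> v) + t\<^sup>2 * q g"
      by (simp add: q_def matrix_vector_right_distrib matrix_vector_mult_scaleR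
          inner_add_left inner_add_right inner_commute[of v g] power2_eq_square algebra_simps)
    moreover have "g \<bullet> (A *v v) = g \<bullet> g + \<mu> * (g \<bullet> v)"
      by (simp add: g_def inner_diff_right)
    ultimately show ?thesis
      using attained symmetric_inner_mult_commute[OF sym, of v g]
      by (simp add: q_def power2_eq_square inner_commute[of v g] algebra_simps)
  qed
  moreover have "q w \<ge> 0" for w
    using lb[of w] by (simp add: q_def)
  ultimately have "g \<bullet> g = 0"
    by (metis quadratic_nonneg_imp_linear_coeff_zero inner_ge_zero)
  then show ?thesis
    by (simp add: g_def)
qed

lemma pos_def_min_eigenpair:
  fixes A :: "real^'n^'n"
  assumes spd: "sym_pos_def A"
  obtains v \<mu> where "v \<noteq> 0" "A *v v = \<mu> *\<^sub>R v" "\<And>w. \<mu> * (w \<bullet> w) \<le> w \<bullet> (A *v w)"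
proof -
  define f where "f w = w \<bullet> (A *v w)" for w
  have "continuous_on (sphere 0 1) f"
    unfolding f_def by (intro continuous_intros)
  then obtain v where v: "norm v = 1" and v_min: "\<And>u. norm u = 1 \<Longrightarrow> f v \<le> f u"
    using continuous_attains_inf[of "sphere (0::real^'n) 1" f] compact_sphere by auto
  have lb: "f v * (w \<bullet> w) \<le> f w" for w
  proof (cases "w = 0")
    case False
    then have "f v \<le> f ((1 / norm w) *\<^sub>R w)"
      by (intro v_min) simp
    then show ?thesis
      using False by (simp add: f_def matrix_vector_mult_scaleR dot_square_norm field_simps power2_eq_square)
  qed (simp add: f_def)
  have "v \<bullet> v = 1"
    using v by (simp add: dot_square_norm)
  then have "A *v v = f v *\<^sub>R v"
    using rayleigh_minimizer_eigenvector[OF sym_pos_defD(1)[OF spd]] lb unfolding f_def by simp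
  moreover have "v \<noteq> 0"
    using v by auto
  ultimately show ?thesis
    using that lb unfolding f_def by blast
qed

lemma sym_pos_def_eigenvalue_pos:
  fixes A :: "real^'n^'n"
  assumes spd: "sym_pos_def A" and "v \<noteq> 0" and "A *v v = \<mu> *\<^sub>R v"
  shows "\<mu> > 0"
proof -
  have "0 < \<mu> * (v \<bullet> v)"
    using sym_pos_defD(2)[OF spd \<open>v \<noteq> 0\<close>] \<open>A *v v = \<mu> *\<^sub>R v\<close> by simp
  moreover have "v \<bullet> v > 0"
    using \<open>v \<noteq> 0\<close> by simp
  ultimately show ?thesis
    by (simp add: zero_less_mult_iff)
qed

lemma lambda_min_le_eigenvalue:
  fixes A :: "real^'n^'n"
  assumes spd: "sym_pos_def A" and eigen: "is_eigenvalue A \<mu>"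
  shows "lambda_min A \<le> \<mu>"
proof -
  have "bdd_below {l. is_eigenvalue A l}"
    using sym_pos_def_eigenvalue_pos[OF spd] unfolding is_eigenvalue_def
    by (intro bdd_belowI[where m = 0]) (auto intro: less_imp_le)
  then show ?thesis
    unfolding lambda_min_def by (rule cInf_lower[rotated]) (simp add: eigen)
qed

lemma lambda_min_energy_le_residual:
  fixes A :: "real^'n^'n"
  assumes spd: "sym_pos_def A"
  shows "lambda_min A * (d \<bullet> (A *v d)) \<le> (A *v d) \<bullet> (A *v d)"
proof -
  obtain v \<mu> where ev: "v \<noteq> 0" "A *v v = \<mu> *\<^sub>R v" and lb: "\<And>w. \<mu> * (w \<bullet> w) \<le> w \<bullet> (A *v w)"
    using pos_def_min_eigenpair[OF spd] by metis
  have "0 \<le> \<mu> * (d \<bullet> (A *v d) - \<mu> * (d \<bullet> d))"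
    using lb[of d] sym_pos_def_eigenvalue_pos[OF spd ev] by simp
  moreover define g where "g = A *v d - \<mu> *\<^sub>R d"
  have "(A *v d) \<bullet> (A *v d) - \<mu> * (d \<bullet> (A *v d))
          = g \<bullet> g + \<mu> * (d \<bullet> (A *v d) - \<mu> * (d \<bullet> d))"
    unfolding g_def
    by (simp add: inner_diff_left inner_diff_right inner_commute[of d "A *v d"] algebra_simps)
  ultimately have "\<mu> * (d \<bullet> (A *v d)) \<le> (A *v d) \<bullet> (A *v d)"
    using inner_ge_zero[of g] by linarith
  moreover have "lambda_min A \<le> \<mu>"
    using ev by (intro lambda_min_le_eigenvalue[OF spd]) (auto simp: is_eigenvalue_def)
  ultimately show ?thesis
    using sym_pos_defD(3)[OF spd, of d] by (meson mult_right_mono order_trans)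
qed

lemma energy_contraction:
  fixes N N' S T R l :: real
  assumes "S / T \<le> N - N'" and "l * N \<le> R" and "R > 0" and "S \<ge> 0" and "T > 0"
  shows "N' \<le> (1 - l / T * (S / R)) * N"
proof -
  have "l / T * (S / R) * N = (S / T) * (l * N / R)"
    by (simp add: field_simps)
  also have "\<dots> \<le> S / T"
    using assms by (intro mult_left_le) (simp_all add: divide_le_eq_1)
  finally show ?thesis
    using assms(1) by (simp add: algebra_simps)
qed

lemma le_sqrt_mult_of_square_le:
  fixes a b c :: real
  assumes "a\<^sup>2 \<le> c * b\<^sup>2" and "b \<ge> 0"
  shows "a \<le> sqrt c * b"
proof -
  have "a \<le> sqrt (a\<^sup>2)"
    by simp
  also have "\<dots> \<le> sqrt (c * b\<^sup>2)"
    using assms(1) by (rule real_sqrt_le_mono)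
  also have "\<dots> = sqrt c * b"
    using assms(2) by (simp add: real_sqrt_mult)
  finally show ?thesis .
qed

lemma sel_projection_step_bounds:
  fixes A :: "real^'n^'n" and b x :: "real^'n" and idx :: "'m::finite \<Rightarrow> 'n"
  assumes spd: "sym_pos_def A" and r_nz: "b - A *v x \<noteq> 0" and inj: "inj idx"
  defines "r \<equiv> b - A *v x" and "E \<equiv> sel_matrix idx"
  defines "y \<equiv> matrix_inv (transpose E ** A ** E) *v (transpose E *v r)"
  defines "d \<equiv> matrix_inv A *v b - x"
  defines "S \<equiv> \<Sum>k\<in>range idx. (r $ k)\<^sup>2" and "T \<equiv> \<Sum>k\<in>range idx. A $ k $ k"
  defines "R \<equiv> \<Sum>k\<in>UNIV. (r $ k)\<^sup>2"
  shows "S / T \<le> (A_norm A d)\<^sup>2 - (A_norm A (d - E *v y))\<^sup>2"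
    and "A_norm A (d - E *v y) \<le> sqrt (1 - lambda_min A / T * (S / R)) * A_norm A d"
proof -
  have energy: "(A_norm A v)\<^sup>2 = v \<bullet> (A *v v)" for v
    using sym_pos_defD(3)[OF spd] by (simp add: A_norm_def)
  have Ad: "A *v d = r"
    unfolding d_def r_def
    by (simp add: matrix_vector_mult_diff_distrib matrix_vector_mul_assoc
        matrix_inv_right[OF sym_pos_def_invertible[OF spd]])
  show decrease: "S / T \<le> (A_norm A d)\<^sup>2 - (A_norm A (d - E *v y))\<^sup>2"
    using sel_projection_energy_decrease[OF spd inj, of d]
    unfolding energy S_def T_def y_def E_def Ad .
  have R: "R = r \<bullet> r"
    unfolding R_def inner_vec_def by (simp add: power2_eq_square)
  have "lambda_min A * (A_norm A d)\<^sup>2 \<le> R"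
    using lambda_min_energy_le_residual[OF spd, of d] unfolding energy Ad R .
  moreover have "R > 0"
    using r_nz unfolding R r_def by simp
  moreover have "S \<ge> 0"
    unfolding S_def by (simp add: sum_nonneg)
  moreover have "T > 0"
    unfolding T_def using sym_pos_def_diag_pos[OF spd] by (simp add: sum_pos)
  ultimately have "(A_norm A (d - E *v y))\<^sup>2 \<le> (1 - lambda_min A / T * (S / R)) * (A_norm A d)\<^sup>2"
    using decrease by (intro energy_contraction)
  then show "A_norm A (d - E *v y) \<le> sqrt (1 - lambda_min A / T * (S / R)) * A_norm A d"
    by (rule le_sqrt_mult_of_square_le) (simp add: A_norm_def sym_pos_defD(3)[OF spd])
qed

theorem theorem1:
  fixes A :: "real^'n^'n" and b x :: "real^'n" and idx :: "'m::finite \<Rightarrow> 'n"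
  assumes spd: "sym_pos_def A"
    and r_nz: "b - A *v x \<noteq> 0"
    and inj: "inj idx"
    and "\<forall>i\<in>range idx. \<forall>j. j \<notin> range idx \<longrightarrow>
                    \<bar>(b - A *v x) $ j\<bar> \<le> \<bar>(b - A *v x) $ i\<bar>"
  shows "let r = b - A *v x; E = sel_matrix idx; J = range idx;
             y = matrix_inv (transpose E ** A ** E) *v (transpose E *v r);
             x_new = x + E *v y;
             d = matrix_inv A *v b - x;
             d_new = matrix_inv A *v b - x_new
         in (A_norm A d)\<^sup>2 - (A_norm A d_new)\<^sup>2 \<ge>
              (\<Sum>k\<in>J. (r $ k)\<^sup>2) / (\<Sum>k\<in>J. A $ k $ k)
          \<and> A_norm A d_new \<le>
              sqrt (1 - lambda_min A / (\<Sum>k\<in>J. A $ k $ k) *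
                        ((\<Sum>k\<in>J. (r $ k)\<^sup>2) / (\<Sum>k\<in>UNIV. (r $ k)\<^sup>2))) * A_norm A d"
  using sel_projection_step_bounds[OF spd r_nz inj] by (simp add: Let_def diff_diff_eq[symmetric])

end
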